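(* Let $\mathcal{M}=(S,P,E,s_{init},L)$ be a CTMC with absorbing goal state $g$ and reward function $\rho\colon S\to\mathbb{R}_{>0}$ (all rewards positive). Let $\varepsilon,\delta\geq0$, let $s,s'\in S$ with $s\sim_{\varepsilon,\delta}s'$, let $r\geq0$, and let $\widehat{q}\geq\max_{p\in S}\widehat{E}(p)$ where $\widehat{E}(p)=E(p)/\rho(p)$. Then $$\left|\mathrm{Pr}_s(\lozenge_{\leq r}g)-\mathrm{Pr}_{s'}(\lozenge_{\leq r}g)\right|\leq 1-e^{-\widehat{q}\, r\,(e^{\delta}(\varepsilon+1)-1)}.$$
   Context: A CTMC $(S,P,E,s_{init},L)$: finite $S$, $P\colon S\to\mathrm{Distr}(S)$ ($P(s,A)=\sum_{a\in A}P(s,a)$), $E\colon S\to\mathbb{R}_{>0}$, initial state, labeling $L$. A timed path is $\sigma=s_0t_0s_1t_1\dots$ with $t_i>0$ the residence time in $s_i$ (exponential with rate $E(s_i)$, next state $s_{i+1}$ drawn with probability $P(s_i,s_{i+1})$). $\sigma@t=s_m$ for $m$ the smallest index with $t\leq\sum_{i=0}^{m}t_i$. The cumulative reward until time $t$ is $\rho(\sigma,t)=\sum_{j=0}^{m-1}t_j\rho(s_j)+(t-\sum_{j=0}^{m-1}t_j)\rho(s_m)$ where $\sigma@t=s_m$. $\mathrm{Pr}_s(\lozenge_{\leq r}g)$ is the probability that the CTMC started in $s$ reaches $g$ while having accumulated reward at most $r$. For $R\subseteq S\times S$, $R(A)=\{t\mid\exists a\in A:(a,t)\in R\}$. In the presence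 of rewards, a reflexive symmetric $R\subseteq S\times S$ is an $(\varepsilon,\delta)$-bisimulation if for all $(s,s')\in R$: $L(s)=L(s')$, $\rho(s)=\rho(s')$, $|\ln E(s)-\ln E(s')|\leq\delta$, and $P(s,A)\leq P(s',R(A))+\varepsilon$ for all $A\subseteq S$; $s\sim_{\varepsilon,\delta}s'$ if some such relation contains $(s,s')$. Standing assumption: $g$ is the unique goal state, absorbing and uniquely labeled. *)

theory Defs
  imports "HOL-Probability.Probability"
begin

text \<open>A CTMC over a finite state type 's is given by P :: 's => 's pmf (embedded
jump chain), exit rates E :: 's => real, and a labelling L.  The initial state is
irrelevant for the statement (probabilities are taken from an arbitrary start state s).

The path probability measure is constructed as follows: in each step n we draw,
independently of everything else, a random successor map f_n : 's => 's with
f_n(p) ~ P(p) independently for all p (Pi_pmf), and a family of residence times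
tau_n(p) ~ Exp(E p) independently for all p.  The timed path from s is then
s_0 = s, s_(n+1) = f_n(s_n), t_n = tau_n(s_n); this gives exactly the law of the
CTMC timed paths.\<close>

definition ctmc_step_measure ::
  "('s::finite \<Rightarrow> 's pmf) \<Rightarrow> ('s \<Rightarrow> real) \<Rightarrow> (('s \<Rightarrow> 's) \<times> ('s \<Rightarrow> real)) measure" where
  "ctmc_step_measure P E =
     pair_measure (measure_pmf (Pi_pmf UNIV undefined P))
                  (PiM UNIV (\<lambda>p. density lborel (exponential_density (E p))))"

definition ctmc_path_measure ::
  "('s::finite \<Rightarrow> 's pmf) \<Rightarrow> ('s \<Rightarrow> real) \<Rightarrow> (nat \<Rightarrow> ('s \<Rightarrow> 's) \<times> ('s \<Rightarrow> real)) measure" where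
  "ctmc_path_measure P E = PiM UNIV (\<lambda>_::nat. ctmc_step_measure P E)"

fun path_state :: "'s \<Rightarrow> (nat \<Rightarrow> ('s \<Rightarrow> 's) \<times> ('s \<Rightarrow> real)) \<Rightarrow> nat \<Rightarrow> 's" where
  "path_state s \<omega> 0 = s"
| "path_state s \<omega> (Suc n) = fst (\<omega> n) (path_state s \<omega> n)"

definition path_time :: "'s \<Rightarrow> (nat \<Rightarrow> ('s \<Rightarrow> 's) \<times> ('s \<Rightarrow> real)) \<Rightarrow> nat \<Rightarrow> real" where
  "path_time s \<omega> n = snd (\<omega> n) (path_state s \<omega> n)"

definition path_index :: "'s \<Rightarrow> (nat \<Rightarrow> ('s \<Rightarrow> 's) \<times> ('s \<Rightarrow> real)) \<Rightarrow> real \<Rightarrow> nat" where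
  "path_index s \<omega> t = (LEAST m. t \<le> (\<Sum>i\<le>m. path_time s \<omega> i))"

definition path_at :: "'s \<Rightarrow> (nat \<Rightarrow> ('s \<Rightarrow> 's) \<times> ('s \<Rightarrow> real)) \<Rightarrow> real \<Rightarrow> 's" where
  "path_at s \<omega> t = path_state s \<omega> (path_index s \<omega> t)"

definition path_reward ::
  "('s \<Rightarrow> real) \<Rightarrow> 's \<Rightarrow> (nat \<Rightarrow> ('s \<Rightarrow> 's) \<times> ('s \<Rightarrow> real)) \<Rightarrow> real \<Rightarrow> real" where
  "path_reward \<rho> s \<omega> t =
     (let m = path_index s \<omega> t in
        (\<Sum>j<m. path_time s \<omega> j * \<rho> (path_state s \<omega> j))
        + (t - (\<Sum>j<m. path_time s \<omega> j)) * \<rho> (path_state s \<omega> m))"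

text \<open>Pr_s(reach g with accumulated reward at most r).  sigma@t is only defined when
some m with t <= sum_(i<=m) t_i exists.\<close>
definition reach_reward_prob ::
  "('s::finite \<Rightarrow> 's pmf) \<Rightarrow> ('s \<Rightarrow> real) \<Rightarrow> ('s \<Rightarrow> real) \<Rightarrow> 's \<Rightarrow> real \<Rightarrow> 's \<Rightarrow> real" where
  "reach_reward_prob P E \<rho> g r s =
     measure (ctmc_path_measure P E)
       {\<omega> \<in> space (ctmc_path_measure P E).
          \<exists>t\<ge>0. (\<exists>m. t \<le> (\<Sum>i\<le>m. path_time s \<omega> i))
                 \<and> path_at s \<omega> t = g \<and> path_reward \<rho> s \<omega> t \<le> r}"

definition is_eps_delta_bisim ::
  "('s \<Rightarrow> 's pmf) \<Rightarrow> ('s \<Rightarrow> real) \<Rightarrow> ('s \<Rightarrow> 'l) \<Rightarrow> ('s \<Rightarrow> real) \<Rightarrow> real \<Rightarrow> real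
    \<Rightarrow> ('s \<times> 's) set \<Rightarrow> bool" where
  "is_eps_delta_bisim P E L \<rho> \<epsilon> \<delta> R \<longleftrightarrow>
     refl R \<and> sym R \<and>
     (\<forall>(s, s') \<in> R. L s = L s' \<and> \<rho> s = \<rho> s' \<and> \<bar>ln (E s) - ln (E s')\<bar> \<le> \<delta> \<and>
        (\<forall>A. measure_pmf.prob (P s) A \<le> measure_pmf.prob (P s') (R `` A) + \<epsilon>))"

definition eps_delta_bisimilar ::
  "('s \<Rightarrow> 's pmf) \<Rightarrow> ('s \<Rightarrow> real) \<Rightarrow> ('s \<Rightarrow> 'l) \<Rightarrow> ('s \<Rightarrow> real) \<Rightarrow> real \<Rightarrow> real
    \<Rightarrow> 's \<Rightarrow> 's \<Rightarrow> bool" where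
  "eps_delta_bisimilar P E L \<rho> \<epsilon> \<delta> s s' \<longleftrightarrow>
     (\<exists>R. is_eps_delta_bisim P E L \<rho> \<epsilon> \<delta> R \<and> (s, s') \<in> R)"

end

theory Submission
  imports Defs
begin

text \<open>Let \<open>F p v\<close> be the probability of reaching \<open>g\<close> from \<open>p\<close> with accumulated reward below
  \<open>v\<close>, and \<open>a p = E p / \<rho> p\<close>.  Conditioning on the first step gives, for \<open>p \<noteq> g\<close>,
  \<open>F p v = \<integral>[0,v] a p * exp (- a p * (v - w)) * \<Phi> p w dw\<close> with \<open>\<Phi> p w = \<Sum>p'. P p p' * F p' w\<close>.
  Uniformizing to a common rate \<open>q \<ge> a p\<close> turns this into
  \<open>exp (q v) * F p v = \<integral>[0,v] exp (q w) * (a p * \<Phi> p w + (q - a p) * F p w) dw\<close>.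
  For an \<open>(\<epsilon>, \<delta>)\<close>-bisimulation \<open>R\<close>, the largest difference \<open>D v\<close> of \<open>F\<close> over \<open>R\<close>-related
  pairs then satisfies \<open>exp (q v) * D v \<le> \<integral>[0,v] exp (q w) * q * (c + (1 - c) * D w) dw\<close>
  with \<open>c = min (exp \<delta> * (\<epsilon> + 1) - 1) 1\<close>: the successor distributions contribute \<open>\<epsilon>\<close>
  (via a layer-cake argument) and the rates a factor \<open>exp \<delta>\<close>.  A Gronwall argument compares
  \<open>D\<close> with the exact solution \<open>1 - exp (- q c v)\<close> of the corresponding equation.\<close>


section \<open>Exponentially weighted integrals\<close>

lemma integrable_on_Icc_if_bounded:
  fixes f :: "real \<Rightarrow> real"
  assumes [measurable]: "f \<in> borel_measurable borel" and B: "\<And>x. x \<in> {a..b} \<Longrightarrow> \<bar>f x\<bar> \<le> B"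
  shows "f integrable_on {a..b}"
proof -
  have "integrable lborel (\<lambda>x. indicator {a..b} x *\<^sub>R f x)"
    by (rule integrableI_bounded_set_indicator[where B=B]) (auto simp: B emeasure_lborel_Icc_eq)
  then show ?thesis
    by (simp add: set_integrable_def set_borel_integral_eq_integral(1))
qed

lemma integrable_on_exp_mult_bounded:
  fixes f :: "real \<Rightarrow> real"
  assumes [measurable]: "f \<in> borel_measurable borel" and f: "\<And>x. x \<in> {0..v} \<Longrightarrow> \<bar>f x\<bar> \<le> C"
    and q: "0 \<le> q"
  shows "(\<lambda>w. exp (q * w) * f w) integrable_on {0..v}"
proof (rule integrable_on_Icc_if_bounded[where B="exp (q * v) * C"])
  fix x assume x: "x \<in> {0..v}"
  then have "exp (q * x) \<le> exp (q * v)" using q by (simp add: mult_left_mono)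
  then show "\<bar>exp (q * x) * f x\<bar> \<le> exp (q * v) * C"
    unfolding abs_mult using f[OF x] by (intro mult_mono) auto
qed simp

lemma integrable_exp_kernel:
  fixes f :: "real \<Rightarrow> real"
  assumes [measurable]: "f \<in> borel_measurable borel" and f: "\<And>w. 0 \<le> f w \<and> f w \<le> 1" and a: "0 \<le> a"
  shows "(\<lambda>w. a * exp (- a * (v - w)) * f w) integrable_on {0..v}"
proof (rule integrable_on_Icc_if_bounded[where B=a])
  fix w assume "w \<in> {0..v}"
  then have "exp (- a * (v - w)) * f w \<le> 1"
    using a f[of w] by (intro mult_le_one) (auto simp: mult_nonneg_nonneg)
  then show "\<bar>a * exp (- a * (v - w)) * f w\<bar> \<le> a"
    using a f[of w] mult_left_mono[of _ 1 a] by (simp add: mult.assoc)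
qed simp

lemma has_integral_exp_derivative:
  fixes k a b :: real
  assumes "a \<le> b"
  shows "((\<lambda>w. k * exp (k * w)) has_integral (exp (k * b) - exp (k * a))) {a..b}"
  by (rule fundamental_theorem_of_calculus[OF assms])
     (auto intro!: derivative_eq_intros simp: has_real_derivative_iff_has_vector_derivative[symmetric])

lemma integral_exp_derivative:
  fixes k a b :: real
  assumes "a \<le> b"
  shows "integral {a..b} (\<lambda>w. c * (k * exp (k * w))) = c * (exp (k * b) - exp (k * a))"
  using integral_mult[OF has_integral_integrable[OF has_integral_exp_derivative[OF assms]], of c]
        integral_unique[OF has_integral_exp_derivative[OF assms]]
  by simp

lemma nn_integral_indicator_Icc_eq_integral:
  fixes f :: "real \<Rightarrow> real"
  assumes "\<And>x. x \<in> {a..b} \<Longrightarrow> 0 \<le> f x" and "f integrable_on {a..b}"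
  shows "(\<integral>\<^sup>+x. ennreal (f x) * indicator {a..b} x \<partial>lborel) = ennreal (integral {a..b} f)"
  using nn_integral_has_integral_lebesgue'[OF assms(1) integrable_integral[OF assms(2)]] by simp

lemma nn_integral_exp_derivative:
  fixes k a b :: real
  assumes "a \<le> b" "0 \<le> k"
  shows "(\<integral>\<^sup>+w. ennreal (k * exp (k * w)) * indicator {a..b} w \<partial>lborel) = ennreal (exp (k * b) - exp (k * a))"
  using nn_integral_indicator_Icc_eq_integral[OF _ has_integral_integrable[OF has_integral_exp_derivative]]
    integral_exp_derivative[of a b 1 k] assms
  by simp

lemma nn_integral_triangle_swap:
  fixes f g :: "real \<Rightarrow> ennreal"
  assumes [measurable]: "f \<in> borel_measurable borel" "g \<in> borel_measurable borel"
  shows "(\<integral>\<^sup>+w. g w * (\<integral>\<^sup>+x. f x * indicator {0..w} x \<partial>lborel) * indicator {0..v} w \<partial>lborel)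
       = (\<integral>\<^sup>+x. f x * (\<integral>\<^sup>+w. g w * indicator {x..v} w \<partial>lborel) * indicator {0..v} x \<partial>lborel)"
proof -
  define K where "K z = f (fst z) * indicator {0..snd z} (fst z) * (g (snd z) * indicator {0..v} (snd z))"
    for z :: "real \<times> real"
  have K_swap: "K (x, w) = g w * indicator {x..v} w * (f x * indicator {0..v} x)" for x w
    by (auto simp: K_def indicator_def mult.commute)
  have [measurable]: "Measurable.pred (borel \<Otimes>\<^sub>M borel) (\<lambda>z::real \<times> real. fst z \<in> {0..snd z})"
    unfolding atLeastAtMost_iff by measurable
  have inner_w: "(\<integral>\<^sup>+x. K (x, w) \<partial>lborel)
      = (\<integral>\<^sup>+x. f x * indicator {0..w} x \<partial>lborel) * (g w * indicator {0..v} w)" for w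
    unfolding K_def fst_conv snd_conv by (rule nn_integral_multc) simp
  have inner_x: "(\<integral>\<^sup>+w. K (x, w) \<partial>lborel)
      = (\<integral>\<^sup>+w. g w * indicator {x..v} w \<partial>lborel) * (f x * indicator {0..v} x)" for x
    unfolding K_swap by (rule nn_integral_multc) simp
  have "(\<integral>\<^sup>+w. g w * (\<integral>\<^sup>+x. f x * indicator {0..w} x \<partial>lborel) * indicator {0..v} w \<partial>lborel)
      = (\<integral>\<^sup>+w. \<integral>\<^sup>+x. K (x, w) \<partial>lborel \<partial>lborel)"
    by (simp add: inner_w mult_ac)
  also have "\<dots> = (\<integral>\<^sup>+x. \<integral>\<^sup>+w. K (x, w) \<partial>lborel \<partial>lborel)"
    by (rule lborel_pair.Fubini') (simp add: K_def)
  also have "\<dots> = (\<integral>\<^sup>+x. f x * (\<integral>\<^sup>+w. g w * indicator {x..v} w \<partial>lborel) * indicator {0..v} x \<partial>lborel)"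
    by (simp add: inner_x mult_ac)
  finally show ?thesis .
qed

lemma integral_exp_mult_indefinite_integral:
  fixes \<phi> :: "real \<Rightarrow> real"
  assumes [measurable]: "\<phi> \<in> borel_measurable borel"
    and \<phi>: "\<And>x. x \<in> {0..v} \<Longrightarrow> 0 \<le> \<phi> x \<and> \<phi> x \<le> B" and k: "0 \<le> k"
  shows "integral {0..v} (\<lambda>w. k * exp (k * w) * integral {0..w} \<phi>)
       = integral {0..v} (\<lambda>x. \<phi> x * (exp (k * v) - exp (k * x)))"
proof -
  have int_\<phi>: "\<phi> integrable_on {0..w}" if "w \<le> v" for w
    by (rule integrable_on_Icc_if_bounded[where B=B]) (use \<phi> that in auto)
  have J_nonneg: "0 \<le> integral {0..w} \<phi>" if "w \<le> v" for w
    using integral_nonneg[OF int_\<phi>[OF that]] \<phi> that by auto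
  have exp_diff_nonneg: "0 \<le> exp (k * v) - exp (k * x)" if "x \<le> v" for x
    using that k by (simp add: mult_left_mono)
  have int_lhs: "(\<lambda>w. k * exp (k * w) * integral {0..w} \<phi>) integrable_on {0..v}"
    by (intro integrable_continuous_interval continuous_intros
          indefinite_integral_continuous_1[OF int_\<phi>]) simp
  have int_rhs: "(\<lambda>x. \<phi> x * (exp (k * v) - exp (k * x))) integrable_on {0..v}"
  proof (rule integrable_on_Icc_if_bounded[where B="B * exp (k * v)"])
    fix x assume x: "x \<in> {0..v}"
    then have "0 \<le> exp (k * v) - exp (k * x)" "exp (k * v) - exp (k * x) \<le> exp (k * v)"
      using exp_diff_nonneg by auto
    then show "\<bar>\<phi> x * (exp (k * v) - exp (k * x))\<bar> \<le> B * exp (k * v)"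
      using \<phi>[OF x] by (auto simp: abs_mult intro!: mult_mono)
  qed simp
  have inner_lhs: "(\<integral>\<^sup>+x. ennreal (\<phi> x) * indicator {0..w} x \<partial>lborel) * indicator {0..v} w
      = ennreal (integral {0..w} \<phi>) * indicator {0..v} w" for w
    using nn_integral_indicator_Icc_eq_integral[OF _ int_\<phi>, of w] \<phi> by (auto simp: indicator_def)
  have inner_rhs: "ennreal (\<phi> x) * (\<integral>\<^sup>+w. ennreal (k * exp (k * w)) * indicator {x..v} w \<partial>lborel)
      * indicator {0..v} x = ennreal (\<phi> x * (exp (k * v) - exp (k * x))) * indicator {0..v} x" for x
    using nn_integral_exp_derivative[of x v k] k \<phi>[of x] exp_diff_nonneg[of x]
    by (auto simp: indicator_def ennreal_mult')
  have "ennreal (integral {0..v} (\<lambda>w. k * exp (k * w) * integral {0..w} \<phi>))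
      = (\<integral>\<^sup>+w. ennreal (k * exp (k * w)) * (\<integral>\<^sup>+x. ennreal (\<phi> x) * indicator {0..w} x \<partial>lborel)
          * indicator {0..v} w \<partial>lborel)"
    using nn_integral_indicator_Icc_eq_integral[OF _ int_lhs] k J_nonneg
    by (simp add: mult.assoc inner_lhs ennreal_mult')
  also have "\<dots> = (\<integral>\<^sup>+x. ennreal (\<phi> x) * (\<integral>\<^sup>+w. ennreal (k * exp (k * w)) * indicator {x..v} w \<partial>lborel)
          * indicator {0..v} x \<partial>lborel)"
    by (rule nn_integral_triangle_swap) simp_all
  also have "\<dots> = ennreal (integral {0..v} (\<lambda>x. \<phi> x * (exp (k * v) - exp (k * x))))"
    using nn_integral_indicator_Icc_eq_integral[OF _ int_rhs] \<phi> exp_diff_nonneg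
    by (simp only: inner_rhs) simp
  finally show ?thesis
    using J_nonneg \<phi> exp_diff_nonneg k
    by (subst (asm) ennreal_inj) (auto intro!: integral_nonneg int_lhs int_rhs)
qed

lemma uniformized_integral_equation:
  fixes \<Phi> F :: "real \<Rightarrow> real"
  assumes [measurable]: "\<Phi> \<in> borel_measurable borel" and \<Phi>: "\<And>x. 0 \<le> \<Phi> x \<and> \<Phi> x \<le> 1"
    and a: "0 \<le> a" "a \<le> q" and v: "0 \<le> v"
    and F_eq: "\<And>w. 0 \<le> w \<Longrightarrow> F w = a * exp (- a * w) * integral {0..w} (\<lambda>x. exp (a * x) * \<Phi> x)"
  shows "exp (q * v) * F v = integral {0..v} (\<lambda>w. exp (q * w) * (a * \<Phi> w + (q - a) * F w))"
proof -
  define k where "k = q - a"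
  define J where "J w = integral {0..w} (\<lambda>x. exp (a * x) * \<Phi> x)" for w
  have k: "0 \<le> k" using a by (simp add: k_def)
  have exp_k: "exp (q * w) * exp (- a * w) = exp (k * w)" for w
    by (simp add: k_def mult_exp_exp algebra_simps)
  have int_\<Phi>: "(\<lambda>w. exp (c * w) * \<Phi> w) integrable_on {0..v}" if "0 \<le> c" for c
    by (rule integrable_on_exp_mult_bounded[where C=1]) (use \<Phi> that in auto)
  have int_J: "(\<lambda>w. k * exp (k * w) * J w) integrable_on {0..v}"
    unfolding J_def
    by (intro integrable_continuous_interval continuous_intros indefinite_integral_continuous_1
          integrable_on_exp_mult_bounded[where C=1]) (use \<Phi> a in auto)
  have "integral {0..v} (\<lambda>w. k * exp (k * w) * J w)
      = integral {0..v} (\<lambda>x. exp (a * x) * \<Phi> x * (exp (k * v) - exp (k * x)))"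
    unfolding J_def
  proof (rule integral_exp_mult_indefinite_integral[OF _ _ k])
    fix x assume "x \<in> {0..v}"
    then have "exp (a * x) \<le> exp (a * v)" using a by (simp add: mult_left_mono)
    moreover have "0 \<le> exp (a * x) * \<Phi> x" "exp (a * x) * \<Phi> x \<le> exp (a * x)"
      using \<Phi>[of x] by (simp_all add: mult_left_le)
    ultimately show "0 \<le> exp (a * x) * \<Phi> x \<and> exp (a * x) * \<Phi> x \<le> exp (a * v)"
      by linarith
  qed simp
  also have "\<dots> = integral {0..v} (\<lambda>x. exp (k * v) * (exp (a * x) * \<Phi> x) - exp (q * x) * \<Phi> x)"
    by (rule integral_cong) (simp add: k_def mult_exp_exp algebra_simps)
  also have "\<dots> = exp (k * v) * J v - integral {0..v} (\<lambda>x. exp (q * x) * \<Phi> x)"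
    using int_\<Phi> a by (simp add: J_def integral_diff integrable_on_mult_right)
  finally have J_part: "integral {0..v} (\<lambda>w. k * exp (k * w) * J w)
      = exp (k * v) * J v - integral {0..v} (\<lambda>x. exp (q * x) * \<Phi> x)" .
  have "integral {0..v} (\<lambda>w. exp (q * w) * (a * \<Phi> w + (q - a) * F w))
      = integral {0..v} (\<lambda>w. a * (exp (q * w) * \<Phi> w) + a * (k * exp (k * w) * J w))"
  proof (rule integral_cong)
    fix w assume "w \<in> {0..v}"
    then have "exp (q * w) * F w = a * (exp (k * w) * J w)"
      by (simp add: F_eq J_def flip: exp_k)
    then show "exp (q * w) * (a * \<Phi> w + (q - a) * F w)
        = a * (exp (q * w) * \<Phi> w) + a * (k * exp (k * w) * J w)"
      by (simp add: k_def algebra_simps)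
  qed
  also have "\<dots> = a * integral {0..v} (\<lambda>w. exp (q * w) * \<Phi> w) + a * integral {0..v} (\<lambda>w. k * exp (k * w) * J w)"
    using int_\<Phi>[of q] int_J a by (subst integral_add) (auto intro: integrable_on_mult_right)
  also have "\<dots> = a * exp (k * v) * J v"
    unfolding J_part by (simp add: algebra_simps)
  also have "\<dots> = exp (q * v) * F v"
    using v by (simp add: F_eq J_def flip: exp_k)
  finally show ?thesis ..
qed


section \<open>A Gronwall-type comparison\<close>

lemma integral_exp_mult_le:
  fixes G :: "real \<Rightarrow> real"
  assumes q: "0 < q" and v: "0 \<le> v" and int_G: "(\<lambda>w. exp (q * w) * G w) integrable_on {0..v}"
    and G_le: "\<And>w. w \<in> {0..v} \<Longrightarrow> G w \<le> M"
  shows "integral {0..v} (\<lambda>w. exp (q * w) * G w) \<le> M / q * (exp (q * v) - 1)"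
proof -
  have "integral {0..v} (\<lambda>w. exp (q * w) * G w) \<le> integral {0..v} (\<lambda>w. M / q * (q * exp (q * w)))"
    using v q G_le
    by (intro integral_le int_G integrable_on_mult_right
          has_integral_integrable[OF has_integral_exp_derivative]) auto
  also have "\<dots> = M / q * (exp (q * v) - 1)"
    using v integral_exp_derivative[of 0 v "M / q" q] by simp
  finally show ?thesis .
qed

text \<open>With \<open>M\<close> the supremum of the positive part of \<open>G\<close> on \<open>[0, V]\<close>, the
  hypothesis yields \<open>G \<le> \<theta> M\<close> on \<open>[0, V]\<close> with \<open>\<theta> = k / q * (1 - exp (- q * V)) < 1\<close>, so \<open>M = 0\<close>.\<close>

lemma nonpos_if_exp_integral_inequality:
  fixes G :: "real \<Rightarrow> real"
  assumes q: "0 < q" and k: "0 \<le> k" "k \<le> q" and V: "0 \<le> V"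
    and G_le: "\<And>v. v \<in> {0..V} \<Longrightarrow> G v \<le> B"
    and int_G: "\<And>v. v \<in> {0..V} \<Longrightarrow> (\<lambda>w. exp (q * w) * G w) integrable_on {0..v}"
    and ineq: "\<And>v. v \<in> {0..V} \<Longrightarrow> exp (q * v) * G v \<le> k * integral {0..v} (\<lambda>w. exp (q * w) * G w)"
  shows "G V \<le> 0"
proof -
  define M where "M = (SUP v\<in>{0..V}. max 0 (G v))"
  define \<theta> where "\<theta> = k / q * (1 - exp (- q * V))"
  have bdd: "bdd_above ((\<lambda>v. max 0 (G v)) ` {0..V})"
    using G_le by (intro bdd_aboveI[where M="max 0 B"]) (auto intro: max.mono)
  have G_le_M: "G v \<le> M" "0 \<le> M" if "v \<in> {0..V}" for v
    using cSUP_upper[OF that bdd] by (auto simp: M_def)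
  have \<theta>: "0 \<le> \<theta>" "\<theta> < 1"
  proof -
    have "k / q \<le> 1" "0 \<le> k / q" using q k by auto
    moreover have exp_V: "0 \<le> 1 - exp (- q * V)" "1 - exp (- q * V) < 1" using q V by auto
    ultimately have "0 \<le> \<theta>" "\<theta> \<le> 1 - exp (- q * V)"
      unfolding \<theta>_def by (metis mult_nonneg_nonneg, metis mult_left_le_one_le)
    then show "0 \<le> \<theta>" "\<theta> < 1" using exp_V by linarith+
  qed
  have "G v \<le> \<theta> * M" if v: "v \<in> {0..V}" for v
  proof -
    have "integral {0..v} (\<lambda>w. exp (q * w) * G w) \<le> M / q * (exp (q * v) - 1)"
      using v G_le_M by (intro integral_exp_mult_le q int_G) auto
    then have "exp (q * v) * G v \<le> k * (M / q * (exp (q * v) - 1))"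
      using ineq[OF v] mult_left_mono[OF _ k(1)] by fastforce
    also have "\<dots> = exp (q * v) * (k / q * M * (1 - exp (- q * v)))"
      using q by (simp add: exp_minus field_simps)
    finally have "G v \<le> k / q * M * (1 - exp (- q * v))"
      by (simp only: mult_le_cancel_left_pos[OF exp_gt_zero])
    also have "\<dots> \<le> k / q * M * (1 - exp (- q * V))"
      using v q k G_le_M[OF v] by (intro mult_left_mono) auto
    also have "\<dots> = \<theta> * M"
      by (simp add: \<theta>_def)
    finally show ?thesis .
  qed
  then have "M \<le> \<theta> * M"
    unfolding M_def using V \<theta> G_le_M by (intro cSUP_least) (auto simp: M_def)
  then have "(1 - \<theta>) * M \<le> 0"
    by (simp add: algebra_simps)
  then have "M \<le> 0"
    using \<theta> by (simp add: mult_le_0_iff)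
  then show ?thesis
    using G_le_M V by fastforce
qed

lemma exp_mult_one_minus_exp_eq_integral:
  fixes q c v :: real
  assumes "0 \<le> v"
  shows "exp (q * v) * (1 - exp (- q * c * v))
       = integral {0..v} (\<lambda>w. exp (q * w) * (q * (c + (1 - c) * (1 - exp (- q * c * w)))))"
proof -
  define k where "k = q * (1 - c)"
  have exp_k: "exp (q * w) * exp (- q * c * w) = exp (k * w)" for w
    by (simp add: k_def mult_exp_exp algebra_simps)
  have "exp (q * w) * (q * (c + (1 - c) * (1 - exp (- q * c * w))))
      = q * exp (q * w) - k * (exp (q * w) * exp (- q * c * w))" for w
    by (simp add: k_def algebra_simps)
  then have "integral {0..v} (\<lambda>w. exp (q * w) * (q * (c + (1 - c) * (1 - exp (- q * c * w)))))
      = integral {0..v} (\<lambda>w. 1 * (q * exp (q * w)) - 1 * (k * exp (k * w)))"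
    by (simp only: exp_k mult_1_left)
  also have "\<dots> = integral {0..v} (\<lambda>w. 1 * (q * exp (q * w))) - integral {0..v} (\<lambda>w. 1 * (k * exp (k * w)))"
    by (intro integral_diff integrable_continuous_interval continuous_intros)
  also have "\<dots> = exp (q * v) - exp (k * v)"
    using assms by (simp only: integral_exp_derivative) simp
  also have "\<dots> = exp (q * v) * (1 - exp (- q * c * v))"
    using exp_k[of v] by (simp add: right_diff_distrib)
  finally show ?thesis ..
qed

text \<open>Comparison with \<open>1 - exp (- q * c * v)\<close>, which satisfies the inequality with equality.\<close>

lemma le_one_minus_exp_if_integral_inequality:
  fixes D :: "real \<Rightarrow> real"
  assumes q: "0 < q" and c: "0 \<le> c" "c \<le> 1" and [measurable]: "D \<in> borel_measurable borel"
    and D: "\<And>v. \<bar>D v\<bar> \<le> 1"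
    and ineq: "\<And>v. 0 \<le> v \<Longrightarrow> exp (q * v) * D v \<le> integral {0..v} (\<lambda>w. exp (q * w) * (q * (c + (1 - c) * D w)))"
    and V: "0 \<le> V"
  shows "D V \<le> 1 - exp (- q * c * V)"
proof -
  define G where "G w = D w - (1 - exp (- q * c * w))" for w
  define k where "k = q * (1 - c)"
  have int_G: "(\<lambda>w. exp (q * w) * G w) integrable_on {0..v}" for v
  proof -
    have "(\<lambda>w. exp (q * w) * D w - exp (q * w) * (1 - exp (- q * c * w))) integrable_on {0..v}"
      using D q by (intro integrable_diff integrable_on_exp_mult_bounded[where C=1]
          integrable_continuous_interval continuous_intros) auto
    then show ?thesis by (simp add: G_def right_diff_distrib)
  qed
  have "G V \<le> 0"
  proof (rule nonpos_if_exp_integral_inequality[OF q _ _ V _ int_G])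
    show "0 \<le> k" "k \<le> q" using q c by (auto simp: k_def mult_left_le)
    show "G v \<le> 1" if "v \<in> {0..V}" for v
    proof -
      have "exp (- q * c * v) \<le> 1" using that q c by simp
      then show ?thesis using abs_le_D1[OF D[of v]] unfolding G_def by linarith
    qed
    show "exp (q * v) * G v \<le> k * integral {0..v} (\<lambda>w. exp (q * w) * G w)" if "v \<in> {0..V}" for v
    proof -
      let ?h = "\<lambda>w. exp (q * w) * (q * (c + (1 - c) * (1 - exp (- q * c * w))))"
      have "integral {0..v} (\<lambda>w. exp (q * w) * (q * (c + (1 - c) * D w)))
          = integral {0..v} (\<lambda>w. ?h w + k * (exp (q * w) * G w))"
        by (rule integral_cong) (simp add: G_def k_def algebra_simps)
      also have "\<dots> = integral {0..v} ?h + k * integral {0..v} (\<lambda>w. exp (q * w) * G w)"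
      proof -
        have "?h integrable_on {0..v}"
          by (intro integrable_continuous_interval continuous_intros)
        then show ?thesis
          using integral_add[OF _ integrable_on_mult_right[OF int_G]] by simp
      qed
      finally show ?thesis
        using ineq[of v] exp_mult_one_minus_exp_eq_integral[of v q c] that
        by (simp add: G_def right_diff_distrib)
    qed
  qed
  then show ?thesis by (simp add: G_def)
qed


section \<open>Expectations of related functions\<close>

lemma has_integral_indicator_atMost:
  fixes x K :: real
  assumes "0 \<le> x" "0 \<le> K"
  shows "(indicator {..x} has_integral min x K) {0..K}"
proof -
  have "((\<lambda>t. 1::real) has_integral min x K) ({..x} \<inter> {0..K})"
    using has_integral_const_real[of "1::real" 0 "min x K"] assms
    by (simp add: Int_atLeastAtMost)
  moreover have "indicator {..x} = (\<lambda>t. if t \<in> {..x} then 1 else 0::real)"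
    by (auto simp: indicator_def)
  ultimately show ?thesis
    by (simp only: has_integral_restrict_Int)
qed

lemma has_integral_prob_superlevel:
  fixes \<mu> :: "'a::finite pmf" and f :: "'a \<Rightarrow> real"
  assumes "\<And>p. 0 \<le> f p" and "0 \<le> K"
  shows "((\<lambda>t. measure_pmf.prob \<mu> {p. t \<le> f p}) has_integral (\<Sum>p\<in>UNIV. pmf \<mu> p * min (f p) K)) {0..K}"
proof -
  have "measure_pmf.prob \<mu> {p. t \<le> f p} = (\<Sum>p\<in>UNIV. pmf \<mu> p * indicator {..f p} t)" for t
    by (simp add: measure_measure_pmf_finite sum.inter_filter[symmetric] indicator_def)
  moreover have "((\<lambda>t. \<Sum>p\<in>UNIV. pmf \<mu> p * indicator {..f p} t) has_integral
      (\<Sum>p\<in>UNIV. pmf \<mu> p * min (f p) K)) {0..K}"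
    using assms by (intro has_integral_sum has_integral_mult_right has_integral_indicator_atMost) auto
  ultimately show ?thesis by simp
qed

text \<open>The hypothesis, applied to the superlevel sets of \<open>H\<close>, is integrated over all levels
  (layer-cake formula).\<close>

lemma pmf_sum_le_related_sum:
  fixes \<mu> \<nu> :: "'a::finite pmf" and H F :: "'a \<Rightarrow> real"
  assumes prob_le: "\<And>A. measure_pmf.prob \<mu> A \<le> measure_pmf.prob \<nu> (R `` A) + \<epsilon>"
    and H: "\<And>p. 0 \<le> H p" "\<And>p. H p \<le> K" and F: "\<And>p. 0 \<le> F p"
    and HF: "\<And>p p'. (p, p') \<in> R \<Longrightarrow> H p \<le> F p'"
  shows "(\<Sum>p\<in>UNIV. pmf \<mu> p * H p) \<le> (\<Sum>p\<in>UNIV. pmf \<nu> p * F p) + \<epsilon> * K"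
proof -
  have K: "0 \<le> K" using H[of undefined] by linarith
  have "(\<Sum>p\<in>UNIV. pmf \<mu> p * H p) \<le> (\<Sum>p\<in>UNIV. pmf \<nu> p * min (F p) K) + \<epsilon> * K"
  proof (rule has_integral_le)
    show "((\<lambda>t. measure_pmf.prob \<mu> {p. t \<le> H p}) has_integral (\<Sum>p\<in>UNIV. pmf \<mu> p * H p)) {0..K}"
      using has_integral_prob_superlevel[of H K \<mu>] H K by (simp add: min_absorb1)
    show "((\<lambda>t. measure_pmf.prob \<nu> {p. t \<le> F p} + \<epsilon>)
        has_integral (\<Sum>p\<in>UNIV. pmf \<nu> p * min (F p) K) + \<epsilon> * K) {0..K}"
      using has_integral_add[OF has_integral_prob_superlevel[OF F K] has_integral_const_real[of \<epsilon> 0 K]] K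
      by (simp add: mult.commute)
  next
    fix t
    have "R `` {p. t \<le> H p} \<subseteq> {p. t \<le> F p}"
      using HF by (auto intro: order.trans)
    then have "measure_pmf.prob \<nu> (R `` {p. t \<le> H p}) \<le> measure_pmf.prob \<nu> {p. t \<le> F p}"
      by (rule measure_pmf.finite_measure_mono) simp
    then show "measure_pmf.prob \<mu> {p. t \<le> H p} \<le> measure_pmf.prob \<nu> {p. t \<le> F p} + \<epsilon>"
      using prob_le[of "{p. t \<le> H p}"] by linarith
  qed
  also have "\<dots> \<le> (\<Sum>p\<in>UNIV. pmf \<nu> p * F p) + \<epsilon> * K"
    by (intro add_right_mono sum_mono mult_left_mono) auto
  finally show ?thesis .
qed


section \<open>Reward-bounded reachability as an integral equation\<close>

text \<open>The difference of the uniformized integrands of two related states: \<open>A, B\<close> are their rates,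
  \<open>X, Y\<close> their successor averages, \<open>U, V\<close> their values and \<open>D\<close> bounds all value differences.\<close>

lemma uniformized_difference_le:
  fixes A B X Y U V D e c q :: real
  assumes A: "0 \<le> A" "A \<le> q" and B: "0 \<le> B" "B \<le> q"
    and e: "0 \<le> e" "e \<le> 1" and c: "e \<le> c" "c \<le> 1" "B * e + A - B \<le> q * c"
    and XY: "X - Y \<le> e + (1 - e) * D" and UV: "U - V \<le> D"
    and UX: "U \<le> X" and X: "X \<le> 1" and V: "0 \<le> V" and D: "D \<le> 1"
  shows "A * X + (q - A) * U - (B * Y + (q - B) * V) \<le> q * (c + (1 - c) * D)"
proof (cases "B \<le> A")
  case True
  have "A * X + (q - A) * U - (B * Y + (q - B) * V) = B * (X - Y) + (A - B) * (X - V) + (q - A) * (U - V)"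
    by (simp add: algebra_simps)
  also have "\<dots> \<le> B * (e + (1 - e) * D) + (A - B) * 1 + (q - A) * D"
    using True XY X V UV A B by (intro add_mono mult_left_mono) auto
  also have "\<dots> = q * D + (1 - D) * (B * e + A - B)"
    by (simp add: algebra_simps)
  also have "\<dots> \<le> q * D + (1 - D) * (q * c)"
    using c D by (intro add_left_mono mult_left_mono) auto
  finally show ?thesis by (simp add: algebra_simps)
next
  case False
  have "A * X + (q - A) * U - (B * Y + (q - B) * V) = A * (X - Y) + (B - A) * (U - Y) + (q - B) * (U - V)"
    by (simp add: algebra_simps)
  also have "\<dots> \<le> A * (e + (1 - e) * D) + (B - A) * (e + (1 - e) * D) + (q - B) * D"
    using False XY UX UV A B by (intro add_mono mult_left_mono) auto
  also have "\<dots> = q * D + (1 - D) * (B * e)"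
    by (simp add: algebra_simps)
  also have "\<dots> \<le> q * D + (1 - D) * (q * c)"
    using B c D e by (intro add_left_mono mult_left_mono mult_mono) auto
  finally show ?thesis by (simp add: algebra_simps)
qed

text \<open>\<open>F p v\<close> stands for the probability of reaching \<open>g\<close> from \<open>p\<close> with accumulated reward below
  \<open>v\<close>, and \<open>a p\<close> for the exit rate of \<open>p\<close> per unit of reward.\<close>

locale reach_integral_equation =
  fixes P :: "'s::finite \<Rightarrow> 's pmf" and a :: "'s \<Rightarrow> real" and g :: 's
    and F :: "'s \<Rightarrow> real \<Rightarrow> real"
  assumes F_nonneg: "\<And>p v. 0 \<le> F p v" and F_le_1: "\<And>p v. F p v \<le> 1"
    and mono_F: "\<And>p. mono (F p)" and rate_pos: "\<And>p. 0 < a p"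
    and F_eq: "\<And>p v. p \<noteq> g \<Longrightarrow> 0 \<le> v \<Longrightarrow> F p v = a p * exp (- a p * v) *
       integral {0..v} (\<lambda>w. exp (a p * w) * (\<Sum>p'\<in>UNIV. pmf (P p) p' * F p' w))"
begin

definition F_succ :: "'s \<Rightarrow> real \<Rightarrow> real" where
  "F_succ p w = (\<Sum>p'\<in>UNIV. pmf (P p) p' * F p' w)"

lemma F_measurable [measurable]: "F p \<in> borel_measurable borel"
  by (rule borel_measurable_mono[OF mono_F])

lemma F_succ_measurable [measurable]: "F_succ p \<in> borel_measurable borel"
  unfolding F_succ_def by measurable

lemma F_succ_nonneg: "0 \<le> F_succ p w"
  unfolding F_succ_def using F_nonneg by (intro sum_nonneg) auto

lemma F_succ_le_1: "F_succ p w \<le> 1"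
proof -
  have "F_succ p w \<le> (\<Sum>p'\<in>UNIV. pmf (P p) p')"
    unfolding F_succ_def using F_le_1 by (intro sum_mono) (simp add: mult_left_le)
  also have "\<dots> = 1" by (rule sum_pmf_eq_1) auto
  finally show ?thesis .
qed

lemma F_succ_mono: "v \<le> w \<Longrightarrow> F_succ p v \<le> F_succ p w"
  unfolding F_succ_def using mono_F by (intro sum_mono mult_left_mono) (auto simp: mono_def)

lemma F_eq_F_succ:
  "p \<noteq> g \<Longrightarrow> 0 \<le> v \<Longrightarrow> F p v = a p * exp (- a p * v) * integral {0..v} (\<lambda>w. exp (a p * w) * F_succ p w)"
  using F_eq unfolding F_succ_def .

lemma F_le_F_succ:
  assumes p: "p \<noteq> g" and v: "0 \<le> v"
  shows "F p v \<le> F_succ p v"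
proof -
  have "integral {0..v} (\<lambda>w. exp (a p * w) * F_succ p w)
      \<le> integral {0..v} (\<lambda>w. F_succ p v / a p * (a p * exp (a p * w)))"
  proof (rule integral_le)
    show "(\<lambda>w. exp (a p * w) * F_succ p w) integrable_on {0..v}"
      using F_succ_nonneg F_succ_le_1 rate_pos[of p]
      by (intro integrable_on_exp_mult_bounded[where C=1]) (auto simp: abs_le_iff less_imp_le)
    show "(\<lambda>w. F_succ p v / a p * (a p * exp (a p * w))) integrable_on {0..v}"
      by (intro integrable_continuous_interval continuous_intros)
  next
    fix w assume "w \<in> {0..v}"
    then show "exp (a p * w) * F_succ p w \<le> F_succ p v / a p * (a p * exp (a p * w))"
      using F_succ_mono[of w v p] rate_pos[of p] by simp
  qed
  also have "\<dots> = F_succ p v / a p * (exp (a p * v) - 1)"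
    using v integral_exp_derivative[of 0 v "F_succ p v / a p" "a p"] by simp
  finally have "F p v \<le> a p * exp (- a p * v) * (F_succ p v / a p * (exp (a p * v) - 1))"
    unfolding F_eq_F_succ[OF p v] using rate_pos[of p] by (intro mult_left_mono) auto
  also have "\<dots> = F_succ p v * (1 - exp (- a p * v))"
    using rate_pos[of p] by (simp add: field_simps exp_minus)
  also have "\<dots> \<le> F_succ p v"
    using F_succ_nonneg[of p v] by (simp add: mult_left_le)
  finally show ?thesis .
qed

lemma F_uniformized:
  assumes "p \<noteq> g" "0 \<le> v" "a p \<le> q"
  shows "exp (q * v) * F p v = integral {0..v} (\<lambda>w. exp (q * w) * (a p * F_succ p w + (q - a p) * F p w))"
  using assms F_succ_nonneg F_succ_le_1 rate_pos[of p] F_eq_F_succ[OF assms(1)]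
  by (intro uniformized_integral_equation) auto

end

locale reach_integral_equation_bisim = reach_integral_equation P a g F
  for P :: "'s::finite \<Rightarrow> 's pmf" and a g F +
  fixes R :: "('s \<times> 's) set" and \<epsilon> \<delta> q :: real
  assumes R_refl: "\<And>p. (p, p) \<in> R"
    and R_goal: "\<And>s s'. (s, s') \<in> R \<Longrightarrow> s = g \<longleftrightarrow> s' = g"
    and R_rate: "\<And>s s'. (s, s') \<in> R \<Longrightarrow> a s \<le> exp \<delta> * a s'"
    and R_prob: "\<And>s s' A. (s, s') \<in> R \<Longrightarrow>
       measure_pmf.prob (P s) A \<le> measure_pmf.prob (P s') (R `` A) + \<epsilon>"
    and eps: "0 \<le> \<epsilon>" and delta: "0 \<le> \<delta>" and rate_le: "\<And>p. a p \<le> q"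
begin

text \<open>Clamping at \<open>1\<close> keeps the Gronwall factor \<open>1 - c\<close> nonnegative.\<close>

definition c :: real where
  "c = min (exp \<delta> * (\<epsilon> + 1) - 1) 1"

definition max_diff :: "real \<Rightarrow> real" where
  "max_diff v = Max ((\<lambda>(s, s'). F s v - F s' v) ` R)"

lemma q_pos: "0 < q"
  using rate_pos[of g] rate_le[of g] by linarith

lemma c_bounds: "min \<epsilon> 1 \<le> c" "c \<le> 1" "c \<le> exp \<delta> * (\<epsilon> + 1) - 1"
proof -
  have "\<epsilon> + 1 \<le> exp \<delta> * (\<epsilon> + 1)"
    using eps delta mult_right_mono[of 1 "exp \<delta>" "\<epsilon> + 1"] by simp
  then show "min \<epsilon> 1 \<le> c" "c \<le> 1" "c \<le> exp \<delta> * (\<epsilon> + 1) - 1"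
    by (auto simp: c_def)
qed

lemma max_diff_ge: "(s, s') \<in> R \<Longrightarrow> F s v - F s' v \<le> max_diff v"
  unfolding max_diff_def by (rule Max_ge) (auto intro: finite_subset[of _ UNIV])

lemma max_diff_attained: "\<exists>(s, s')\<in>R. max_diff v = F s v - F s' v"
proof -
  have "max_diff v \<in> (\<lambda>(s, s'). F s v - F s' v) ` R"
    unfolding max_diff_def using R_refl by (intro Max_in) (auto intro: finite_subset[of _ UNIV])
  then show ?thesis by auto
qed

lemma max_diff_nonneg: "0 \<le> max_diff v"
  using max_diff_ge[OF R_refl] by fastforce

lemma max_diff_le_1: "max_diff v \<le> 1"
  using max_diff_attained[of v] F_nonneg F_le_1 by (smt (verit) case_prodE)

lemma max_diff_measurable [measurable]: "max_diff \<in> borel_measurable borel"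
  unfolding max_diff_def
  by (rule borel_measurable_Max) (auto intro: finite_subset[of _ UNIV] split: prod.split)

lemma F_succ_diff_le:
  assumes "(s, s') \<in> R"
  shows "F_succ s v - F_succ s' v \<le> min \<epsilon> 1 + (1 - min \<epsilon> 1) * max_diff v"
proof -
  define D where "D = max_diff v"
  define H where "H p = max 0 (F p v - D)" for p
  have "(\<Sum>p\<in>UNIV. pmf (P s) p * H p) \<le> F_succ s' v + \<epsilon> * (1 - D)"
    unfolding F_succ_def
  proof (rule pmf_sum_le_related_sum[OF R_prob[OF assms]])
    show "H p \<le> 1 - D" "0 \<le> H p" for p
      using F_le_1[of p v] max_diff_le_1[of v] by (auto simp: H_def D_def)
    show "H p \<le> F p' v" if "(p, p') \<in> R" for p p'
      using max_diff_ge[OF that, of v] F_nonneg[of p' v] by (simp add: H_def D_def)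
  qed (rule F_nonneg)
  moreover have "F_succ s v \<le> (\<Sum>p\<in>UNIV. pmf (P s) p * H p) + D"
  proof -
    have "F_succ s v \<le> (\<Sum>p\<in>UNIV. pmf (P s) p * (H p + D))"
      unfolding F_succ_def by (intro sum_mono mult_left_mono) (auto simp: H_def)
    also have "\<dots> = (\<Sum>p\<in>UNIV. pmf (P s) p * H p) + D"
      by (simp add: distrib_left sum.distrib sum_pmf_eq_1 flip: sum_distrib_right)
    finally show ?thesis .
  qed
  ultimately have "F_succ s v - F_succ s' v \<le> \<epsilon> + (1 - \<epsilon>) * D"
    by (simp add: algebra_simps)
  moreover have "F_succ s v - F_succ s' v \<le> 1"
    using F_succ_le_1[of s v] F_succ_nonneg[of s' v] by linarith
  ultimately show ?thesis
    by (cases "\<epsilon> \<le> 1") (auto simp: D_def min_def)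
qed

lemma rate_slack_le:
  assumes "(s, s') \<in> R"
  shows "a s' * min \<epsilon> 1 + a s - a s' \<le> q * c"
proof -
  have "a s' * min \<epsilon> 1 + a s - a s' \<le> a s' * (exp \<delta> * (\<epsilon> + 1) - 1)"
  proof -
    have "a s' * min \<epsilon> 1 \<le> a s' * (exp \<delta> * \<epsilon>)"
      using eps delta rate_pos[of s'] mult_right_mono[of 1 "exp \<delta>" \<epsilon>]
      by (intro mult_left_mono) auto
    then show ?thesis
      using R_rate[OF assms] by (simp add: algebra_simps)
  qed
  also have "\<dots> \<le> q * (exp \<delta> * (\<epsilon> + 1) - 1)"
    using rate_le[of s'] c_bounds eps by (intro mult_right_mono) auto
  finally have "a s' * min \<epsilon> 1 + a s - a s' \<le> q * (exp \<delta> * (\<epsilon> + 1) - 1)" .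
  moreover have "a s' * min \<epsilon> 1 \<le> a s'"
    using rate_pos[of s'] by (intro mult_left_le) auto
  then have "a s' * min \<epsilon> 1 + a s - a s' \<le> q"
    using rate_le[of s] by linarith
  ultimately show ?thesis
    by (simp add: c_def min_def)
qed

lemma integrable_uniformized_F:
  "(\<lambda>w. exp (q * w) * (a p * F_succ p w + (q - a p) * F p w)) integrable_on {0..v}"
proof (rule integrable_on_exp_mult_bounded[where C=q])
  fix w
  have "0 \<le> a p * F_succ p w" "a p * F_succ p w \<le> a p"
    using rate_pos[of p] F_succ_nonneg F_succ_le_1 by (simp_all add: mult_left_le)
  moreover have "0 \<le> (q - a p) * F p w" "(q - a p) * F p w \<le> q - a p"
    using rate_le[of p] F_nonneg F_le_1 by (simp_all add: mult_left_le)
  ultimately show "\<bar>a p * F_succ p w + (q - a p) * F p w\<bar> \<le> q" by simp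
qed (use q_pos in auto)

lemma integrable_max_diff_bound:
  "(\<lambda>w. exp (q * w) * (q * (c + (1 - c) * max_diff w))) integrable_on {0..v}"
proof (rule integrable_on_exp_mult_bounded[where C=q])
  fix w
  have "0 \<le> (1 - c) * max_diff w" "(1 - c) * max_diff w \<le> 1 - c"
    using c_bounds max_diff_nonneg max_diff_le_1 eps by (simp_all add: mult_left_le)
  then show "\<bar>q * (c + (1 - c) * max_diff w)\<bar> \<le> q"
    using q_pos c_bounds eps by (simp add: abs_mult mult_left_le)
qed (use q_pos in auto)

lemma exp_F_diff_le:
  assumes R: "(s, s') \<in> R" and s: "s \<noteq> g" and v: "0 \<le> v"
  shows "exp (q * v) * (F s v - F s' v) \<le> integral {0..v} (\<lambda>w. exp (q * w) * (q * (c + (1 - c) * max_diff w)))"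
proof -
  have s': "s' \<noteq> g" using R_goal[OF R] s by simp
  have "exp (q * v) * (F s v - F s' v)
      = integral {0..v} (\<lambda>w. exp (q * w) * (a s * F_succ s w + (q - a s) * F s w)
          - exp (q * w) * (a s' * F_succ s' w + (q - a s') * F s' w))"
    using F_uniformized[OF s v rate_le] F_uniformized[OF s' v rate_le]
    by (simp add: integral_diff integrable_uniformized_F right_diff_distrib)
  also have "\<dots> \<le> integral {0..v} (\<lambda>w. exp (q * w) * (q * (c + (1 - c) * max_diff w)))"
  proof (intro integral_le integrable_diff integrable_uniformized_F integrable_max_diff_bound)
    fix w assume w: "w \<in> {0..v}"
    have "a s * F_succ s w + (q - a s) * F s w - (a s' * F_succ s' w + (q - a s') * F s' w)
        \<le> q * (c + (1 - c) * max_diff w)"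
      using rate_pos[of s] rate_le[of s] rate_pos[of s'] rate_le[of s'] eps c_bounds
        rate_slack_le[OF R] F_succ_diff_le[OF R] max_diff_ge[OF R] F_le_F_succ[OF s] w
        F_succ_le_1 F_nonneg max_diff_le_1
      by (intro uniformized_difference_le) auto
    then show "exp (q * w) * (a s * F_succ s w + (q - a s) * F s w)
        - exp (q * w) * (a s' * F_succ s' w + (q - a s') * F s' w)
        \<le> exp (q * w) * (q * (c + (1 - c) * max_diff w))"
      by (simp flip: right_diff_distrib)
  qed
  finally show ?thesis .
qed

lemma exp_max_diff_le:
  assumes v: "0 \<le> v"
  shows "exp (q * v) * max_diff v \<le> integral {0..v} (\<lambda>w. exp (q * w) * (q * (c + (1 - c) * max_diff w)))"
proof -
  obtain s s' where R: "(s, s') \<in> R" and max: "max_diff v = F s v - F s' v"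
    using max_diff_attained by blast
  show ?thesis
  proof (cases "s = g")
    case True
    then have "max_diff v = 0" using R_goal[OF R] max by simp
    moreover have "0 \<le> integral {0..v} (\<lambda>w. exp (q * w) * (q * (c + (1 - c) * max_diff w)))"
      using q_pos c_bounds eps max_diff_nonneg
      by (intro integral_nonneg integrable_max_diff_bound) auto
    ultimately show ?thesis by simp
  next
    case False
    then show ?thesis using exp_F_diff_le[OF R False v] max by simp
  qed
qed

theorem F_diff_le:
  assumes "(s, s') \<in> R" "0 \<le> r"
  shows "F s r - F s' r \<le> 1 - exp (- q * r * (exp \<delta> * (\<epsilon> + 1) - 1))"
proof -
  have "F s r - F s' r \<le> max_diff r"
    by (rule max_diff_ge[OF assms(1)])
  also have "\<dots> \<le> 1 - exp (- q * c * r)"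
    using q_pos c_bounds eps max_diff_nonneg max_diff_le_1 exp_max_diff_le assms(2)
    by (intro le_one_minus_exp_if_integral_inequality) auto
  also have "\<dots> \<le> 1 - exp (- q * r * (exp \<delta> * (\<epsilon> + 1) - 1))"
    using mult_left_mono[OF mult_right_mono[OF c_bounds(3) assms(2)], of q] q_pos
    by (simp add: mult_ac)
  finally show ?thesis .
qed

end


section \<open>The path measure of a CTMC\<close>

lemma le_exp_mult_if_abs_ln_diff_le:
  fixes x y \<delta> :: real
  assumes "0 < x" "0 < y" "\<bar>ln x - ln y\<bar> \<le> \<delta>"
  shows "x \<le> exp \<delta> * y"
proof -
  have "exp (ln x) \<le> exp (\<delta> + ln y)"
    using assms(3) by simp
  then show ?thesis
    using assms(1,2) by (simp add: exp_add)
qed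

lemma nn_integral_exponential_density_reversed:
  fixes f :: "real \<Rightarrow> real"
  assumes [measurable]: "f \<in> borel_measurable borel" and f: "\<And>w. 0 \<le> f w \<and> f w \<le> 1"
    and f_nonpos: "\<And>w. w \<le> 0 \<Longrightarrow> f w = 0" and l: "0 < l" and \<rho>: "0 < \<rho>"
  shows "(\<integral>\<^sup>+t. exponential_density l t * ennreal (f (v - t * \<rho>)) \<partial>lborel)
       = ennreal (integral {0..v} (\<lambda>w. l / \<rho> * exp (- (l / \<rho>) * (v - w)) * f w))"
proof -
  have [measurable]: "(\<lambda>t. ennreal (exponential_density l t)) \<in> borel_measurable borel"
    by (simp add: borel_measurable_erlang_density)
  have "(\<integral>\<^sup>+t. exponential_density l t * ennreal (f (v - t * \<rho>)) \<partial>lborel)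
      = ennreal \<bar>- 1 / \<rho>\<bar> * (\<integral>\<^sup>+w. exponential_density l (v / \<rho> + - 1 / \<rho> * w)
          * ennreal (f (v - (v / \<rho> + - 1 / \<rho> * w) * \<rho>)) \<partial>lborel)"
    by (rule nn_integral_real_affine) (use \<rho> in auto)
  also have "\<dots> = (\<integral>\<^sup>+w. ennreal (1 / \<rho>) * (exponential_density l ((v - w) / \<rho>) * ennreal (f w)) \<partial>lborel)"
  proof -
    have "v / \<rho> + - 1 / \<rho> * w = (v - w) / \<rho>" "v - (v - w) / \<rho> * \<rho> = w" for w
      using \<rho> by (simp_all add: field_simps)
    then show ?thesis using \<rho> by (simp add: nn_integral_cmult)
  qed
  also have "\<dots> = (\<integral>\<^sup>+w. ennreal (l / \<rho> * exp (- (l / \<rho>) * (v - w)) * f w) * indicator {0..v} w \<partial>lborel)"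
  proof (rule nn_integral_cong)
    fix w
    consider "w < 0" | "w \<in> {0..v}" | "v < w" by fastforce
    then show "ennreal (1 / \<rho>) * (exponential_density l ((v - w) / \<rho>) * ennreal (f w))
        = ennreal (l / \<rho> * exp (- (l / \<rho>) * (v - w)) * f w) * indicator {0..v} w"
    proof cases
      case 2
      then have "exponential_density l ((v - w) / \<rho>) = l * exp (- (l / \<rho>) * (v - w))"
        using \<rho> by (simp add: exponential_density_def field_simps)
      then show ?thesis
        using 2 l \<rho> f[of w] by (simp add: ennreal_mult[symmetric] mult.assoc[symmetric])
    qed (use \<rho> f_nonpos in \<open>auto simp: exponential_density_def divide_neg_pos\<close>)
  qed
  also have "\<dots> = ennreal (integral {0..v} (\<lambda>w. l / \<rho> * exp (- (l / \<rho>) * (v - w)) * f w))"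
    using l \<rho> f by (intro nn_integral_indicator_Icc_eq_integral integrable_exp_kernel) auto
  finally show ?thesis .
qed

lemma AE_exponential_density_pos:
  assumes "0 < l"
  shows "AE t in density lborel (exponential_density l). 0 < t"
proof -
  have "AE t in lborel. 0 < ennreal (exponential_density l t) \<longrightarrow> 0 < t"
    using AE_lborel_singleton[of 0] by eventually_elim (auto simp: exponential_density_def)
  then show ?thesis
    by (subst AE_density) (auto simp: borel_measurable_erlang_density)
qed

type_synonym 's choice_seq = "nat \<Rightarrow> ('s \<Rightarrow> 's) \<times> ('s \<Rightarrow> real)"

locale ctmc =
  fixes P :: "'s::finite \<Rightarrow> 's pmf" and E :: "'s \<Rightarrow> real" and \<rho> :: "'s \<Rightarrow> real" and g :: 's
  assumes E_pos: "\<And>p. 0 < E p" and rho_pos: "\<And>p. 0 < \<rho> p"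
begin

abbreviation "M \<equiv> ctmc_step_measure P E"
abbreviation "\<Omega> \<equiv> ctmc_path_measure P E"
abbreviation "T \<equiv> PiM UNIV (\<lambda>p. density lborel (exponential_density (E p)))"

lemma prob_space_T: "prob_space T"
  by (intro prob_space_PiM prob_space_exponential_density E_pos)

lemma prob_space_M: "prob_space M"
proof -
  interpret T: prob_space T by (rule prob_space_T)
  interpret pair_prob_space "measure_pmf (Pi_pmf UNIV undefined P)" T ..
  show ?thesis unfolding ctmc_step_measure_def by (rule P.prob_space_axioms)
qed

lemma space_M: "space M = UNIV"
  by (simp add: ctmc_step_measure_def space_pair_measure space_PiM)

lemma space_\<Omega>: "space \<Omega> = UNIV"
  by (simp add: ctmc_path_measure_def space_PiM space_M)

sublocale S: sequence_space M
  unfolding sequence_space_def product_prob_space_def product_sigma_finite_def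
    product_prob_space_axioms_def
  using prob_space_M prob_space_imp_sigma_finite by auto

lemma \<Omega>_eq: "\<Omega> = S.S"
  by (simp add: ctmc_path_measure_def)

sublocale \<Omega>: prob_space \<Omega>
  unfolding \<Omega>_eq by (rule S.prob_space_axioms)

lemma measurable_step: "(\<lambda>\<omega>. \<omega> n) \<in> \<Omega> \<rightarrow>\<^sub>M M"
  unfolding ctmc_path_measure_def by simp

lemma measurable_successor: "(\<lambda>\<omega>. fst (\<omega> n) p) \<in> \<Omega> \<rightarrow>\<^sub>M count_space UNIV"
proof -
  have "fst \<in> M \<rightarrow>\<^sub>M measure_pmf (Pi_pmf UNIV undefined P)"
    unfolding ctmc_step_measure_def by simp
  then have "(\<lambda>x. fst x p) \<in> M \<rightarrow>\<^sub>M count_space UNIV"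
    by (rule measurable_compose) simp
  then show ?thesis
    by (rule measurable_compose[OF measurable_step])
qed

lemma measurable_residence: "(\<lambda>\<omega>. snd (\<omega> n) p) \<in> borel_measurable \<Omega>"
proof -
  have "snd \<in> M \<rightarrow>\<^sub>M T"
    unfolding ctmc_step_measure_def by simp
  then have "(\<lambda>x. snd x p) \<in> borel_measurable M"
    by (rule measurable_compose) (rule measurable_component_singleton[THEN measurable_compose]; simp)
  then show ?thesis
    by (rule measurable_compose[OF measurable_step])
qed

lemma measurable_path_state [measurable]: "(\<lambda>\<omega>. path_state s \<omega> n) \<in> \<Omega> \<rightarrow>\<^sub>M count_space UNIV"
proof (induction n)
  case (Suc n)
  have "(\<lambda>\<omega>. fst (\<omega> n) (path_state s \<omega> n)) \<in> \<Omega> \<rightarrow>\<^sub>M count_space UNIV"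
    by (rule measurable_compose_countable'[OF measurable_successor Suc]) simp
  then show ?case by simp
qed simp

lemma measurable_path_time [measurable]: "(\<lambda>\<omega>. path_time s \<omega> n) \<in> borel_measurable \<Omega>"
  unfolding path_time_def
  by (rule measurable_compose_countable'[OF measurable_residence measurable_path_state]) simp

definition reward_before :: "'s \<Rightarrow> 's choice_seq \<Rightarrow> nat \<Rightarrow> real" where
  "reward_before s \<omega> m = (\<Sum>j<m. path_time s \<omega> j * \<rho> (path_state s \<omega> j))"

text \<open>The inequality is strict: by the convention for \<open>\<sigma>@t\<close>, the goal is occupied only after its
  entry time, so entering it with reward exactly \<open>v\<close> is too late.\<close>

definition hits_goal :: "'s \<Rightarrow> real \<Rightarrow> 's choice_seq set" where
  "hits_goal s v = {\<omega>. \<exists>m. path_state s \<omega> m = g \<and> reward_before s \<omega> m < v}"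

lemma reward_before_0 [simp]: "reward_before s \<omega> 0 = 0"
  by (simp add: reward_before_def)

lemma path_state_case_nat_Suc: "path_state s (case_nat x \<omega>) (Suc m) = path_state (fst x s) \<omega> m"
  by (induction m) auto

lemma reward_before_case_nat_Suc:
  "reward_before s (case_nat x \<omega>) (Suc m) = snd x s * \<rho> s + reward_before (fst x s) \<omega> m"
  unfolding reward_before_def sum.lessThan_Suc_shift
  by (simp add: path_time_def path_state_case_nat_Suc del: path_state.simps(2))

lemma case_nat_in_hits_goal_iff:
  "case_nat x \<omega> \<in> hits_goal s v \<longleftrightarrow> (s = g \<and> 0 < v) \<or> \<omega> \<in> hits_goal (fst x s) (v - snd x s * \<rho> s)"
    (is "?lhs \<longleftrightarrow> _")
proof -
  have "?lhs \<longleftrightarrow> (\<exists>m. path_state s (case_nat x \<omega>) m = g \<and> reward_before s (case_nat x \<omega>) m < v)"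
    by (simp add: hits_goal_def)
  also have "\<dots> \<longleftrightarrow> (s = g \<and> 0 < v) \<or>
      (\<exists>m. path_state s (case_nat x \<omega>) (Suc m) = g \<and> reward_before s (case_nat x \<omega>) (Suc m) < v)"
    by (metis not0_implies_Suc path_state.simps(1) reward_before_0)
  also have "\<dots> \<longleftrightarrow> (s = g \<and> 0 < v) \<or> \<omega> \<in> hits_goal (fst x s) (v - snd x s * \<rho> s)"
    by (simp add: hits_goal_def path_state_case_nat_Suc reward_before_case_nat_Suc algebra_simps
        del: path_state.simps(2))
  finally show ?thesis .
qed

lemma measurable_reward_before [measurable]: "(\<lambda>\<omega>. reward_before s \<omega> m) \<in> borel_measurable \<Omega>"
  unfolding reward_before_def
  by (intro borel_measurable_sum borel_measurable_times measurable_path_time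
      measurable_compose[OF measurable_path_state]) simp

lemma hits_goal_sets [measurable]: "hits_goal s v \<in> sets \<Omega>"
proof -
  have "hits_goal s v = {\<omega> \<in> space \<Omega>. \<exists>m. path_state s \<omega> m = g \<and> reward_before s \<omega> m < v}"
    by (simp add: hits_goal_def space_\<Omega>)
  also have "\<dots> \<in> sets \<Omega>" by measurable
  finally show ?thesis .
qed

text \<open>First-step analysis: a path is a first step followed by an independent path.\<close>

lemma emeasure_hits_goal_unfold:
  "emeasure \<Omega> (hits_goal s v) = (if s = g \<and> 0 < v then 1 else
     \<integral>\<^sup>+x. emeasure \<Omega> (hits_goal (fst x s) (v - snd x s * \<rho> s)) \<partial>M)"
proof -
  let ?f = "\<lambda>(x, \<omega>). case_nat x \<omega>"
  have f: "?f \<in> M \<Otimes>\<^sub>M \<Omega> \<rightarrow>\<^sub>M \<Omega>"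
    unfolding \<Omega>_eq by measurable
  have "emeasure \<Omega> (hits_goal s v) = emeasure (distr (M \<Otimes>\<^sub>M \<Omega>) \<Omega> ?f) (hits_goal s v)"
    using S.PiM_iter by (simp add: \<Omega>_eq)
  also have "\<dots> = emeasure (M \<Otimes>\<^sub>M \<Omega>) (?f -` hits_goal s v \<inter> space (M \<Otimes>\<^sub>M \<Omega>))"
    by (rule emeasure_distr[OF f hits_goal_sets])
  also have "\<dots> = \<integral>\<^sup>+x. emeasure \<Omega> (Pair x -` (?f -` hits_goal s v \<inter> space (M \<Otimes>\<^sub>M \<Omega>))) \<partial>M"
    unfolding \<Omega>_eq
    by (rule S.emeasure_pair_measure_alt) (use measurable_sets[OF f hits_goal_sets] in \<open>simp add: \<Omega>_eq\<close>)
  also have "\<dots> = \<integral>\<^sup>+x. (if s = g \<and> 0 < v then 1 else emeasure \<Omega> (hits_goal (fst x s) (v - snd x s * \<rho> s))) \<partial>M"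
  proof (rule nn_integral_cong)
    fix x
    have "Pair x -` (?f -` hits_goal s v \<inter> space (M \<Otimes>\<^sub>M \<Omega>)) =
          (if s = g \<and> 0 < v then space \<Omega> else hits_goal (fst x s) (v - snd x s * \<rho> s))"
      by (auto simp: space_pair_measure space_M space_\<Omega> case_nat_in_hits_goal_iff)
    then show "emeasure \<Omega> (Pair x -` (?f -` hits_goal s v \<inter> space (M \<Otimes>\<^sub>M \<Omega>))) =
      (if s = g \<and> 0 < v then 1 else emeasure \<Omega> (hits_goal (fst x s) (v - snd x s * \<rho> s)))"
      using \<Omega>.emeasure_space_1 by simp
  qed
  also have "\<dots> = (if s = g \<and> 0 < v then 1 else
     \<integral>\<^sup>+x. emeasure \<Omega> (hits_goal (fst x s) (v - snd x s * \<rho> s)) \<partial>M)"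
    using prob_space.emeasure_space_1[OF prob_space_M] by (cases "s = g \<and> 0 < v") auto
  finally show ?thesis .
qed

lemma nn_integral_step:
  fixes G :: "'s \<Rightarrow> real \<Rightarrow> ennreal"
  assumes [measurable]: "\<And>p. G p \<in> borel_measurable borel"
  shows "(\<integral>\<^sup>+x. G (fst x s) (snd x s) \<partial>M) =
    (\<Sum>p\<in>UNIV. ennreal (pmf (P s) p) * \<integral>\<^sup>+t. ennreal (exponential_density (E s) t) * G p t \<partial>lborel)"
proof -
  let ?A = "measure_pmf (Pi_pmf UNIV undefined P)"
  let ?D = "density lborel (exponential_density (E s))"
  interpret T: prob_space T by (rule prob_space_T)
  have comp: "(\<lambda>\<tau>. \<tau> s) \<in> T \<rightarrow>\<^sub>M borel"
    by (rule measurable_component_singleton[THEN measurable_compose]) auto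
  have G_meas: "(\<lambda>x. G (fst x s) (snd x s)) \<in> borel_measurable (?A \<Otimes>\<^sub>M T)"
  proof (rule measurable_compose_countable'[where g="\<lambda>x. fst x s"])
    show "(\<lambda>x. G p (snd x s)) \<in> borel_measurable (?A \<Otimes>\<^sub>M T)" for p
      by (rule measurable_compose[OF measurable_compose[OF measurable_snd comp]]) simp
    show "(\<lambda>x. fst x s) \<in> (?A \<Otimes>\<^sub>M T) \<rightarrow>\<^sub>M count_space UNIV"
      by (rule measurable_compose[OF measurable_fst]) simp
  qed simp
  have "(\<integral>\<^sup>+x. G (fst x s) (snd x s) \<partial>M) = (\<integral>\<^sup>+f. \<integral>\<^sup>+\<tau>. G (f s) (\<tau> s) \<partial>T \<partial>?A)"
    unfolding ctmc_step_measure_def using T.nn_integral_fst[OF G_meas] by simp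
  also have "\<dots> = (\<integral>\<^sup>+f. \<integral>\<^sup>+t. G (f s) t \<partial>?D \<partial>?A)"
  proof (rule nn_integral_cong)
    fix f :: "'s \<Rightarrow> 's"
    have "(\<integral>\<^sup>+t. G (f s) t \<partial>?D) = (\<integral>\<^sup>+t. G (f s) t \<partial>distr T ?D (\<lambda>\<tau>. \<tau> s))"
      by (subst distr_PiM_component) (auto intro: prob_space_exponential_density E_pos)
    also have "\<dots> = (\<integral>\<^sup>+\<tau>. G (f s) (\<tau> s) \<partial>T)"
      by (rule nn_integral_distr) (auto simp: measurable_component_singleton)
    finally show "(\<integral>\<^sup>+\<tau>. G (f s) (\<tau> s) \<partial>T) = (\<integral>\<^sup>+t. G (f s) t \<partial>?D)" ..
  qed
  also have "\<dots> = (\<integral>\<^sup>+p. \<integral>\<^sup>+t. G p t \<partial>?D \<partial>measure_pmf (map_pmf (\<lambda>f. f s) (Pi_pmf UNIV undefined P)))"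
    by simp
  also have "map_pmf (\<lambda>f. f s) (Pi_pmf UNIV undefined P) = P s"
    by (simp add: Pi_pmf_component)
  also have "(\<integral>\<^sup>+p. \<integral>\<^sup>+t. G p t \<partial>?D \<partial>measure_pmf (P s)) = (\<Sum>p\<in>UNIV. (\<integral>\<^sup>+t. G p t \<partial>?D) * pmf (P s) p)"
    by (rule nn_integral_measure_pmf_support) auto
  finally show ?thesis
    by (simp add: nn_integral_density mult.commute)
qed

lemma AE_step_residence_pos: "AE x in M. 0 < snd x p"
proof -
  let ?A = "measure_pmf (Pi_pmf UNIV undefined P)"
  interpret T: prob_space T by (rule prob_space_T)
  interpret pair_sigma_finite ?A T
    by (intro pair_sigma_finite.intro prob_space_imp_sigma_finite prob_space_measure_pmf T.prob_space_axioms)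
  have "AE \<tau> in T. 0 < \<tau> p"
    by (rule AE_PiM_component) (auto intro: prob_space_exponential_density E_pos AE_exponential_density_pos)
  moreover have "(\<lambda>x. snd x p) \<in> borel_measurable (?A \<Otimes>\<^sub>M T)"
    by (rule measurable_compose[OF measurable_snd]) (rule measurable_component_singleton[THEN measurable_compose]; simp)
  ultimately have "AE x in ?A \<Otimes>\<^sub>M T. 0 < snd x p"
    by (intro AE_pair_measure) auto
  then show ?thesis unfolding ctmc_step_measure_def .
qed

lemma AE_path_time_pos: "AE \<omega> in \<Omega>. \<forall>s j. 0 < path_time s \<omega> j"
proof -
  have "AE \<omega> in \<Omega>. 0 < snd (\<omega> j) p" for j p
    unfolding ctmc_path_measure_def by (rule AE_PiM_component) (auto intro: prob_space_M AE_step_residence_pos)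
  then have "AE \<omega> in \<Omega>. \<forall>j p. 0 < snd (\<omega> j) p"
    by (simp add: AE_all_countable)
  then show ?thesis
    by eventually_elim (simp add: path_time_def)
qed

definition hit_prob :: "'s \<Rightarrow> real \<Rightarrow> real" where
  "hit_prob p v = measure \<Omega> (hits_goal p v)"

lemma emeasure_hits_goal: "emeasure \<Omega> (hits_goal p v) = ennreal (hit_prob p v)"
  unfolding hit_prob_def by (rule \<Omega>.emeasure_eq_measure)

lemma hit_prob_nonneg: "0 \<le> hit_prob p v"
  by (simp add: hit_prob_def)

lemma hit_prob_le_1: "hit_prob p v \<le> 1"
  unfolding hit_prob_def by (rule \<Omega>.prob_le_1)

lemma mono_hit_prob: "mono (hit_prob p)"
  unfolding mono_def hit_prob_def hits_goal_def
  by (auto intro!: \<Omega>.finite_measure_mono hits_goal_sets[unfolded hits_goal_def])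

lemma measurable_hit_prob [measurable]: "hit_prob p \<in> borel_measurable borel"
  by (rule borel_measurable_mono[OF mono_hit_prob])

lemma hit_prob_nonpos:
  assumes "v \<le> 0"
  shows "hit_prob p v = 0"
proof -
  have "AE \<omega> in \<Omega>. \<omega> \<notin> hits_goal p v"
    using AE_path_time_pos
  proof eventually_elim
    case (elim \<omega>)
    have "0 \<le> reward_before p \<omega> m" for m
      unfolding reward_before_def using elim rho_pos by (intro sum_nonneg) (simp add: less_imp_le)
    then show ?case using assms by (auto simp: hits_goal_def not_less intro: order.trans)
  qed
  then have "emeasure \<Omega> (hits_goal p v) = 0"
    by (subst AE_iff_measurable[OF hits_goal_sets, symmetric]) (auto simp: space_\<Omega>)
  then show ?thesis
    using emeasure_hits_goal[of p v] hit_prob_nonneg[of p v] by simp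
qed

lemma hit_prob_first_step:
  assumes p: "p \<noteq> g" and v: "0 \<le> v"
  shows "hit_prob p v = (\<Sum>p'\<in>UNIV. pmf (P p) p' *
    integral {0..v} (\<lambda>w. E p / \<rho> p * exp (- (E p / \<rho> p) * (v - w)) * hit_prob p' w))"
proof -
  define a where "a = E p / \<rho> p"
  define I where "I p' = integral {0..v} (\<lambda>w. a * exp (- a * (v - w)) * hit_prob p' w)" for p'
  have a: "0 < a" using E_pos rho_pos by (simp add: a_def)
  have I_nonneg: "0 \<le> I p'" for p'
    unfolding I_def using a hit_prob_nonneg hit_prob_le_1
    by (intro integral_nonneg integrable_exp_kernel) (auto simp: less_imp_le)
  have "ennreal (hit_prob p v) = (\<integral>\<^sup>+x. ennreal (hit_prob (fst x p) (v - snd x p * \<rho> p)) \<partial>M)"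
    using p by (simp add: emeasure_hits_goal_unfold flip: emeasure_hits_goal)
  also have "\<dots> = (\<Sum>p'\<in>UNIV. ennreal (pmf (P p) p') *
      \<integral>\<^sup>+t. ennreal (exponential_density (E p) t) * ennreal (hit_prob p' (v - t * \<rho> p)) \<partial>lborel)"
    by (rule nn_integral_step) simp
  also have "\<dots> = (\<Sum>p'\<in>UNIV. ennreal (pmf (P p) p' * I p'))"
  proof -
    have "(\<integral>\<^sup>+t. ennreal (exponential_density (E p) t) * ennreal (hit_prob p' (v - t * \<rho> p)) \<partial>lborel)
        = ennreal (I p')" for p'
      unfolding I_def a_def
      by (rule nn_integral_exponential_density_reversed) (use E_pos rho_pos hit_prob_nonneg
          hit_prob_le_1 hit_prob_nonpos in auto)
    then show ?thesis using I_nonneg by (simp add: ennreal_mult)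
  qed
  also have "\<dots> = ennreal (\<Sum>p'\<in>UNIV. pmf (P p) p' * I p')"
    using I_nonneg by (simp add: sum_ennreal)
  finally show ?thesis
    unfolding a_def[symmetric] using I_nonneg hit_prob_nonneg by (simp add: I_def sum_nonneg)
qed

lemma hit_prob_eq:
  assumes p: "p \<noteq> g" and v: "0 \<le> v"
  shows "hit_prob p v = E p / \<rho> p * exp (- (E p / \<rho> p) * v) *
     integral {0..v} (\<lambda>w. exp (E p / \<rho> p * w) * (\<Sum>p'\<in>UNIV. pmf (P p) p' * hit_prob p' w))"
proof -
  define a where "a = E p / \<rho> p"
  have a: "0 \<le> a" using E_pos[of p] rho_pos[of p] by (simp add: a_def)
  have "hit_prob p v
      = integral {0..v} (\<lambda>w. \<Sum>p'\<in>UNIV. pmf (P p) p' * (a * exp (- a * (v - w)) * hit_prob p' w))"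
    using hit_prob_first_step[OF p v, folded a_def] integrable_exp_kernel[OF _ _ a] hit_prob_nonneg hit_prob_le_1
    by (simp add: integral_sum integrable_on_mult_right)
  also have "\<dots> = integral {0..v} (\<lambda>w. a * exp (- a * v) * (exp (a * w) * (\<Sum>p'\<in>UNIV. pmf (P p) p' * hit_prob p' w)))"
  proof -
    have "exp (- a * (v - w)) = exp (- a * v) * exp (a * w)" for w
      by (simp add: mult_exp_exp algebra_simps)
    then show ?thesis by (simp add: sum_distrib_left mult_ac)
  qed
  finally show ?thesis by (simp add: a_def)
qed

definition time_before :: "'s \<Rightarrow> 's choice_seq \<Rightarrow> nat \<Rightarrow> real" where
  "time_before s \<omega> m = (\<Sum>j<m. path_time s \<omega> j)"

text \<open>The latest time during the \<open>m\<close>-th sojourn at which the accumulated reward, were the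
  \<open>m\<close>-th state the goal, is still at most \<open>r\<close>.  It turns the existential over real times in the
  reachability event into a countable one.\<close>

definition latest_time :: "real \<Rightarrow> 's \<Rightarrow> 's choice_seq \<Rightarrow> nat \<Rightarrow> real" where
  "latest_time r s \<omega> m = min (time_before s \<omega> (Suc m)) (time_before s \<omega> m + (r - reward_before s \<omega> m) / \<rho> g)"

lemma sum_atMost_path_time: "(\<Sum>i\<le>m. path_time s \<omega> i) = time_before s \<omega> (Suc m)"
  by (simp add: time_before_def lessThan_Suc_atMost)

lemma reach_condition_iff:
  "(\<exists>t\<ge>0. (\<exists>m. t \<le> (\<Sum>i\<le>m. path_time s \<omega> i)) \<and> path_at s \<omega> t = g \<and> path_reward \<rho> s \<omega> t \<le> r) \<longleftrightarrow>
   (\<exists>m. path_state s \<omega> m = g \<and> 0 \<le> latest_time r s \<omega> m \<and>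
      (\<forall>j<m. time_before s \<omega> (Suc j) < latest_time r s \<omega> m))"
  (is "?L \<longleftrightarrow> ?R")
proof
  assume ?L
  then obtain t where t: "0 \<le> t" "\<exists>m. t \<le> time_before s \<omega> (Suc m)"
    and at: "path_at s \<omega> t = g" and reward: "path_reward \<rho> s \<omega> t \<le> r"
    by (auto simp: sum_atMost_path_time)
  define m where "m = path_index s \<omega> t"
  have t_le: "t \<le> time_before s \<omega> (Suc m)"
    using LeastI_ex[OF t(2)] by (simp add: m_def path_index_def sum_atMost_path_time)
  have t_gt: "time_before s \<omega> (Suc j) < t" if "j < m" for j
    using not_less_Least[OF that[unfolded m_def path_index_def]] by (simp add: sum_atMost_path_time)
  have m: "path_state s \<omega> m = g" using at by (simp add: path_at_def m_def)
  have "reward_before s \<omega> m + (t - time_before s \<omega> m) * \<rho> g \<le> r"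
    using reward m unfolding path_reward_def reward_before_def time_before_def m_def[symmetric] by simp
  then have "t - time_before s \<omega> m \<le> (r - reward_before s \<omega> m) / \<rho> g"
    using rho_pos[of g] by (simp add: pos_le_divide_eq)
  then have "t \<le> latest_time r s \<omega> m"
    using t_le by (simp add: latest_time_def)
  then show ?R
    using m t t_gt by (intro exI[of _ m]) (auto intro: less_le_trans)
next
  assume ?R
  then obtain m where m: "path_state s \<omega> m = g" and nonneg: "0 \<le> latest_time r s \<omega> m"
    and later: "\<And>j. j < m \<Longrightarrow> time_before s \<omega> (Suc j) < latest_time r s \<omega> m" by blast
  define t where "t = latest_time r s \<omega> m"
  have t_le: "t \<le> time_before s \<omega> (Suc m)" by (simp add: t_def latest_time_def)
  have index: "path_index s \<omega> t = m"
    unfolding path_index_def sum_atMost_path_time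
  proof (rule Least_equality)
    show "m \<le> j" if "t \<le> time_before s \<omega> (Suc j)" for j
      using later[of j] that by (force simp: t_def)
  qed (rule t_le)
  have "t - time_before s \<omega> m \<le> (r - reward_before s \<omega> m) / \<rho> g"
    by (simp add: t_def latest_time_def)
  then have "path_reward \<rho> s \<omega> t \<le> r"
    using m rho_pos[of g]
    by (simp add: path_reward_def index reward_before_def time_before_def pos_le_divide_eq)
  moreover have "path_at s \<omega> t = g"
    by (simp add: path_at_def index m)
  ultimately show ?L
    using nonneg t_le unfolding sum_atMost_path_time t_def by blast
qed

lemma measurable_time_before [measurable]: "(\<lambda>\<omega>. time_before s \<omega> m) \<in> borel_measurable \<Omega>"
  unfolding time_before_def by measurable

lemma measurable_latest_time [measurable]: "(\<lambda>\<omega>. latest_time r s \<omega> m) \<in> borel_measurable \<Omega>"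
  unfolding latest_time_def by measurable

definition reach_event :: "real \<Rightarrow> 's \<Rightarrow> 's choice_seq set" where
  "reach_event r s = {\<omega> \<in> space \<Omega>. \<exists>t\<ge>0. (\<exists>m. t \<le> (\<Sum>i\<le>m. path_time s \<omega> i)) \<and>
     path_at s \<omega> t = g \<and> path_reward \<rho> s \<omega> t \<le> r}"

lemma reach_event_sets: "reach_event r s \<in> sets \<Omega>"
  unfolding reach_event_def reach_condition_iff by measurable

lemma reach_event_imp_hits_goal:
  assumes "\<omega> \<in> reach_event r s"
  shows "s = g \<or> \<omega> \<in> hits_goal s r"
proof -
  obtain m where m: "path_state s \<omega> m = g"
    and later: "\<And>j. j < m \<Longrightarrow> time_before s \<omega> (Suc j) < latest_time r s \<omega> m"
    using assms unfolding reach_event_def reach_condition_iff by blast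
  show ?thesis
  proof (cases m)
    case (Suc m')
    have "time_before s \<omega> m < time_before s \<omega> m + (r - reward_before s \<omega> m) / \<rho> g"
      using later[of m'] Suc by (simp add: latest_time_def)
    then have "reward_before s \<omega> m < r"
      using rho_pos[of g] by (simp add: zero_less_divide_iff)
    then show ?thesis using m by (auto simp: hits_goal_def)
  qed (use m in simp)
qed

lemma reach_event_if_hits_goal:
  assumes r: "0 \<le> r" and pos: "\<And>j. 0 < path_time s \<omega> j" and "s = g \<or> \<omega> \<in> hits_goal s r"
  shows "\<omega> \<in> reach_event r s"
proof -
  from assms(3) obtain m where m: "path_state s \<omega> m = g" and "m = 0 \<or> reward_before s \<omega> m < r"
  proof
    assume "s = g"
    then show thesis using that[of 0] by simp
  qed (auto simp: hits_goal_def)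
  have before_nonneg: "0 \<le> time_before s \<omega> n" for n
    unfolding time_before_def using pos by (intro sum_nonneg) (simp add: less_imp_le)
  have before_mono: "time_before s \<omega> j \<le> time_before s \<omega> n" if "j \<le> n" for j n
    unfolding time_before_def using that pos by (intro sum_mono2) (auto intro: less_imp_le)
  have before_less: "time_before s \<omega> n < time_before s \<omega> (Suc n)" for n
    using pos[of n] by (simp add: time_before_def)
  from \<open>m = 0 \<or> _\<close> have "0 \<le> latest_time r s \<omega> m \<and> (\<forall>j<m. time_before s \<omega> (Suc j) < latest_time r s \<omega> m)"
  proof
    assume "m = 0"
    then show ?thesis
      using r rho_pos[of g] before_less[of 0] by (simp add: latest_time_def time_before_def)
  next
    assume "reward_before s \<omega> m < r"
    then have "time_before s \<omega> m < latest_time r s \<omega> m"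
      using before_less[of m] rho_pos[of g] by (simp add: latest_time_def)
    moreover have "time_before s \<omega> (Suc j) \<le> time_before s \<omega> m" if "j < m" for j
      using before_mono that by simp
    ultimately show ?thesis
      using before_nonneg[of m] by (auto intro: le_less_trans)
  qed
  then show ?thesis
    using m unfolding reach_event_def reach_condition_iff by (auto simp: space_\<Omega>)
qed

lemma reach_reward_prob_eq:
  assumes "0 \<le> r"
  shows "reach_reward_prob P E \<rho> g r s = (if s = g then 1 else hit_prob s r)"
proof -
  have "reach_reward_prob P E \<rho> g r s = measure \<Omega> (reach_event r s)"
    by (simp add: reach_reward_prob_def reach_event_def)
  also have "\<dots> = measure \<Omega> ({\<omega>. s = g} \<union> hits_goal s r)"
  proof (rule measure_eq_AE)
    show "AE \<omega> in \<Omega>. \<omega> \<in> reach_event r s \<longleftrightarrow> \<omega> \<in> {\<omega>. s = g} \<union> hits_goal s r"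
      using AE_path_time_pos
      by eventually_elim (blast intro: reach_event_if_hits_goal[OF assms] dest: reach_event_imp_hits_goal)
    show "{\<omega>. s = g} \<union> hits_goal s r \<in> sets \<Omega>"
      using hits_goal_sets sets.top[of \<Omega>] by (cases "s = g") (auto simp: space_\<Omega>)
  qed (rule reach_event_sets)
  also have "\<dots> = (if s = g then 1 else hit_prob s r)"
    using \<Omega>.prob_space by (cases "s = g") (auto simp: hit_prob_def space_\<Omega>)
  finally show ?thesis .
qed

lemma hit_prob_bisim:
  assumes R: "is_eps_delta_bisim P E L \<rho> \<epsilon> \<delta> R" and label: "\<And>p. L p = L g \<Longrightarrow> p = g"
    and "0 \<le> \<epsilon>" "0 \<le> \<delta>" and q: "Max ((\<lambda>p. E p / \<rho> p) ` UNIV) \<le> q"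
  shows "reach_integral_equation_bisim P (\<lambda>p. E p / \<rho> p) g hit_prob R \<epsilon> \<delta> q"
proof unfold_locales
  have R_props: "L s = L s'" "\<rho> s = \<rho> s'" "\<bar>ln (E s) - ln (E s')\<bar> \<le> \<delta>"
    "measure_pmf.prob (P s) A \<le> measure_pmf.prob (P s') (R `` A) + \<epsilon>" if "(s, s') \<in> R" for s s' A
    using R that unfolding is_eps_delta_bisim_def by auto
  show "(p, p) \<in> R" for p
    using R by (auto simp: is_eps_delta_bisim_def refl_on_def)
  show "s = g \<longleftrightarrow> s' = g" if "(s, s') \<in> R" for s s'
    using R_props(1)[OF that] label by metis
  show "E s / \<rho> s \<le> exp \<delta> * (E s' / \<rho> s')" if "(s, s') \<in> R" for s s'
    using le_exp_mult_if_abs_ln_diff_le[OF E_pos E_pos R_props(3)[OF that]] R_props(2)[OF that] rho_pos[of s']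
    by (simp add: divide_right_mono)
  show "measure_pmf.prob (P s) A \<le> measure_pmf.prob (P s') (R `` A) + \<epsilon>" if "(s, s') \<in> R" for s s' A
    using R_props(4)[OF that] .
  show "E p / \<rho> p \<le> q" for p
    using Max_ge[of "range (\<lambda>p. E p / \<rho> p)" "E p / \<rho> p"] q by simp
qed (use assms E_pos rho_pos hit_prob_nonneg hit_prob_le_1 mono_hit_prob hit_prob_eq in auto)

end

theorem proposition9:
  fixes P :: "'s::finite \<Rightarrow> 's pmf" and E :: "'s \<Rightarrow> real" and L :: "'s \<Rightarrow> 'l"
    and \<rho> :: "'s \<Rightarrow> real" and g s s' :: 's and \<epsilon> \<delta> r q :: real
  assumes E_pos: "\<And>p. E p > 0"
    and rho_pos: "\<And>p. \<rho> p > 0"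
    and g_absorbing: "P g = return_pmf g"
    and g_unique_label: "\<And>p. L p = L g \<Longrightarrow> p = g"
    and eps: "\<epsilon> \<ge> 0" and delta: "\<delta> \<ge> 0"
    and bisim: "eps_delta_bisimilar P E L \<rho> \<epsilon> \<delta> s s'"
    and r: "r \<ge> 0"
    and q: "q \<ge> Max ((\<lambda>p. E p / \<rho> p) ` UNIV)"
  shows "\<bar>reach_reward_prob P E \<rho> g r s - reach_reward_prob P E \<rho> g r s'\<bar>
           \<le> 1 - exp (- q * r * (exp \<delta> * (\<epsilon> + 1) - 1))"
proof -
  interpret ctmc P E \<rho> g
    using E_pos rho_pos by unfold_locales
  obtain R where R: "is_eps_delta_bisim P E L \<rho> \<epsilon> \<delta> R" and ss': "(s, s') \<in> R"
    using bisim unfolding eps_delta_bisimilar_def by blast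
  interpret reach_integral_equation_bisim P "\<lambda>p. E p / \<rho> p" g hit_prob R \<epsilon> \<delta> q
    using R g_unique_label eps delta q by (rule hit_prob_bisim)
  have s's: "(s', s) \<in> R"
    using R ss' by (auto simp: is_eps_delta_bisim_def dest: symD)
  show ?thesis
    using F_diff_le[OF ss' r] F_diff_le[OF s's r] F_diff_le[OF R_refl r] R_goal[OF ss']
    by (auto simp: reach_reward_prob_eq[OF r] abs_le_iff)
qed

end
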